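(* Let $G$ be an abelian group, let $n\geq 1$, let $X\subseteq G$ be a finite, nonempty subset, let $\mathscr A=A_1\cdot\ldots\cdot A_n$ be a setpartition over $G$, let $H=\mathsf H(X+\sum_{i=1}^{n}A_i)$ and let $Z=\bigcap_{i=1}^n(A_i+H)$. Suppose $\sum_{i=1}^{n}|A_i|\leq 2n$, $|A_i\setminus Z|\leq 1$ for all $i\in [1,n]$, and $|X+\sum_{i=1}^{n}A_i|< |X+H|+\big(\sum_{i=1}^{n}|A_i|-n\big)|H|$. Then $H$ is nontrivial and $Z=\alpha+H$ for some $\alpha\in G$.
   Context: A setpartition over $G$ is a finite unordered list $\mathscr A=A_1\cdot\ldots\cdot A_n$ of finite nonempty subsets of $G$. $\mathsf H(A)=\{g\in G:g+A=A\}$ is the stabilizer. Sumsets $A_1+\dots+A_n=\{a_1+\dots+a_n:a_i\in A_i\}$. *)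

theory Defs
  imports Main
begin

definition sumset :: "'a::ab_group_add set \<Rightarrow> 'a set \<Rightarrow> 'a set" where
  "sumset A B = {a + b | a b. a \<in> A \<and> b \<in> B}"

definition sumset_fam :: "(nat \<Rightarrow> 'a::ab_group_add set) \<Rightarrow> nat set \<Rightarrow> 'a set" where
  "sumset_fam A I = {(\<Sum>i\<in>I. f i) | f. \<forall>i\<in>I. f i \<in> A i}"

definition stab :: "'a::ab_group_add set \<Rightarrow> 'a set" where
  "stab A = {g. (\<lambda>a. g + a) ` A = A}"

end

theory Submission
  imports Defs
begin

(* Put S = X + A_1 + ... + A_n and H = stab S. For k <= n the partial sumsets
   W_k = (X + H) + A_1 + ... + A_k all have stabilizer exactly H, because
   H <= stab (X + H) <= stab W_k <= stab (S + H) = H. Adding a pair {p, q} with q - p not in H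
   to a finite H-periodic set W gains at least |H| elements: some w in W has w + (q - p) not in W,
   and then the whole coset w + q + H lies in W + q but misses W + p. So if every A_i is a
   singleton or a pair meeting two H-cosets, |S| >= |X + H| + (sum |A_i| - n) |H|, contradicting
   the hypothesis.
   The set Z is H-periodic, hence empty, one H-coset, or meets two H-cosets. In the last case
   every A_i meets two H-cosets, and sum |A_i| <= 2n forces each A_i to be such a pair; if Z is
   empty, |A_i| = |A_i - Z| <= 1; if Z is a coset of the trivial group, Z is a point, |A_i| <= 2
   and the coset condition is vacuous. *)

section \<open>Sumsets\<close>

lemma finite_sumset:
  assumes "finite A" and "finite B"
  shows "finite (sumset A B)"
proof -
  have "sumset A B = (\<lambda>(a, b). a + b) ` (A \<times> B)" unfolding sumset_def by auto
  with assms show ?thesis by simp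
qed

lemma sumset_eq_empty_iff: "sumset A B = {} \<longleftrightarrow> A = {} \<or> B = {}"
  unfolding sumset_def by auto

lemma sumset_commute: "sumset A B = sumset B A"
  unfolding sumset_def using add.commute by blast

lemma sumset_assoc: "sumset (sumset A B) C = sumset A (sumset B C)"
  unfolding sumset_def by (auto, metis add.assoc, metis add.assoc)

lemma sumset_singleton: "sumset W {p} = (\<lambda>x. x + p) ` W"
  unfolding sumset_def by auto

lemma sumset_pair: "sumset W {p, q} = (\<lambda>x. x + p) ` W \<union> (\<lambda>x. x + q) ` W"
  unfolding sumset_def by auto

lemma sumset_fam_empty [simp]: "sumset_fam A {} = {0}"
  unfolding sumset_fam_def by auto

lemma sumset_fam_insert:
  assumes "finite I" "i \<notin> I"
  shows "sumset_fam A (insert i I) = sumset (sumset_fam A I) (A i)"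
proof (intro equalityI subsetI)
  fix x assume "x \<in> sumset_fam A (insert i I)"
  then obtain f where x: "x = (\<Sum>j\<in>insert i I. f j)" and f: "\<forall>j\<in>insert i I. f j \<in> A j"
    unfolding sumset_fam_def by blast
  have "x = (\<Sum>j\<in>I. f j) + f i" using assms x by (simp add: add.commute)
  moreover have "(\<Sum>j\<in>I. f j) \<in> sumset_fam A I" using f unfolding sumset_fam_def by auto
  ultimately show "x \<in> sumset (sumset_fam A I) (A i)" using f unfolding sumset_def by blast
next
  fix x assume "x \<in> sumset (sumset_fam A I) (A i)"
  then obtain f a where x: "x = (\<Sum>j\<in>I. f j) + a" and f: "\<forall>j\<in>I. f j \<in> A j" and a: "a \<in> A i"
    unfolding sumset_def sumset_fam_def by blast
  have "(\<Sum>j\<in>I. (f(i := a)) j) = (\<Sum>j\<in>I. f j)"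
    using assms(2) by (intro sum.cong) auto
  with assms x have "x = (\<Sum>j\<in>insert i I. (f(i := a)) j)" by (simp add: add.commute)
  moreover have "\<forall>j\<in>insert i I. (f(i := a)) j \<in> A j" using f a by auto
  ultimately show "x \<in> sumset_fam A (insert i I)" unfolding sumset_fam_def by blast
qed

lemma finite_sumset_fam:
  "finite I \<Longrightarrow> \<forall>i\<in>I. finite (A i) \<Longrightarrow> finite (sumset_fam A I)"
  by (induction I rule: finite_induct) (auto simp: sumset_fam_insert finite_sumset)

lemma sumset_fam_nonempty:
  "finite I \<Longrightarrow> \<forall>i\<in>I. A i \<noteq> {} \<Longrightarrow> sumset_fam A I \<noteq> {}"
  by (induction I rule: finite_induct) (auto simp: sumset_fam_insert sumset_eq_empty_iff)

section \<open>Stabilizers\<close>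

lemma stab_iff: "g \<in> stab Y \<longleftrightarrow> (\<forall>y. g + y \<in> Y \<longleftrightarrow> y \<in> Y)"
proof
  assume "g \<in> stab Y"
  then have shift: "(\<lambda>a. g + a) ` Y = Y" by (simp add: stab_def)
  show "\<forall>y. g + y \<in> Y \<longleftrightarrow> y \<in> Y"
  proof (intro allI iffI)
    fix y assume "g + y \<in> Y"
    then obtain y' where "y' \<in> Y" "g + y = g + y'" using shift by (metis imageE)
    then show "y \<in> Y" by simp
  next
    fix y assume "y \<in> Y"
    then show "g + y \<in> Y" using shift by blast
  qed
next
  assume shift: "\<forall>y. g + y \<in> Y \<longleftrightarrow> y \<in> Y"
  have "x \<in> (\<lambda>a. g + a) ` Y" if "x \<in> Y" for x
  proof
    show "x = g + (- g + x)" by simp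
    show "- g + x \<in> Y" using shift[rule_format, of "- g + x"] that by simp
  qed
  with shift show "g \<in> stab Y" unfolding stab_def by auto
qed

lemma zero_in_stab: "0 \<in> stab Y"
  by (simp add: stab_iff)

lemma stab_add:
  assumes "g \<in> stab Y" and "h \<in> stab Y"
  shows "g + h \<in> stab Y"
  using assms unfolding stab_iff by (simp add: add.assoc)

lemma stab_uminus:
  assumes "g \<in> stab Y"
  shows "- g \<in> stab Y"
proof -
  have "g + (- g + y) \<in> Y \<longleftrightarrow> - g + y \<in> Y" for y
    using assms unfolding stab_iff by blast
  then show ?thesis unfolding stab_iff by simp
qed

lemma stabI_closed:
  assumes "\<And>y. y \<in> Y \<Longrightarrow> g + y \<in> Y" and "\<And>y. y \<in> Y \<Longrightarrow> - g + y \<in> Y"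
  shows "g \<in> stab Y"
  unfolding stab_iff
proof (intro allI iffI)
  fix y assume "g + y \<in> Y"
  then have "- g + (g + y) \<in> Y" by (rule assms(2))
  then show "y \<in> Y" by simp
qed (rule assms(1))

lemma stab_if_translate_subset:
  assumes "finite Y" and "(\<lambda>y. g + y) ` Y \<subseteq> Y"
  shows "g \<in> stab Y"
proof -
  have "(\<lambda>y. g + y) ` Y = Y" using assms by (rule endo_inj_surj) (simp add: inj_on_def)
  then show ?thesis by (simp add: stab_def)
qed

lemma finite_stab:
  assumes "finite S" and "s \<in> S"
  shows "finite (stab S)"
proof -
  have "g \<in> (\<lambda>t. t - s) ` S" if "g \<in> stab S" for g
  proof
    show "g = (g + s) - s" by simp
    show "g + s \<in> S" using that assms(2) by (simp add: stab_iff)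
  qed
  then have "stab S \<subseteq> (\<lambda>t. t - s) ` S" by blast
  then show ?thesis by (rule finite_subset[OF _ finite_imageI[OF assms(1)]])
qed

lemma sumset_stab_self: "sumset S (stab S) = S"
proof (intro equalityI subsetI)
  fix x assume "x \<in> sumset S (stab S)"
  then obtain s g where "x = s + g" "s \<in> S" "g \<in> stab S" unfolding sumset_def by blast
  moreover from this have "g + s \<in> S" by (simp add: stab_iff)
  ultimately show "x \<in> S" by (simp add: add.commute)
next
  fix x assume "x \<in> S"
  moreover have "x = x + 0" by simp
  ultimately show "x \<in> sumset S (stab S)" using zero_in_stab unfolding sumset_def by blast
qed

lemma stab_subset_stab_sumset: "stab Y \<subseteq> stab (sumset Y B)"
proof
  have shift: "g + x \<in> sumset Y B" if g: "g \<in> stab Y" and x: "x \<in> sumset Y B" for g x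
  proof -
    obtain y b where "x = y + b" "y \<in> Y" "b \<in> B" using x unfolding sumset_def by blast
    moreover have "g + x = (g + y) + b" using \<open>x = y + b\<close> by (simp add: add.assoc)
    moreover have "g + y \<in> Y" using g \<open>y \<in> Y\<close> by (simp add: stab_iff)
    ultimately show ?thesis unfolding sumset_def by blast
  qed
  fix g assume g: "g \<in> stab Y"
  show "g \<in> stab (sumset Y B)"
    by (rule stabI_closed[OF shift[OF g] shift[OF stab_uminus[OF g]]])
qed

lemma stab_subset_stab_sumset_stab: "stab C \<subseteq> stab (sumset B (stab C))"
proof
  have shift: "g + x \<in> sumset B (stab C)" if g: "g \<in> stab C" and x: "x \<in> sumset B (stab C)" for g x
  proof -
    obtain b h where "x = b + h" "b \<in> B" "h \<in> stab C" using x unfolding sumset_def by blast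
    moreover have "g + x = b + (g + h)" using \<open>x = b + h\<close> by (simp add: add.left_commute)
    moreover have "g + h \<in> stab C" using g \<open>h \<in> stab C\<close> by (rule stab_add)
    ultimately show ?thesis unfolding sumset_def by blast
  qed
  fix g assume g: "g \<in> stab C"
  show "g \<in> stab (sumset B (stab C))"
    by (rule stabI_closed[OF shift[OF g] shift[OF stab_uminus[OF g]]])
qed

lemma stab_INT: "\<forall>i\<in>I. g \<in> stab (B i) \<Longrightarrow> g \<in> stab (\<Inter>i\<in>I. B i)"
  by (simp add: stab_iff)

lemma eq_coset_if_periodic:
  assumes "H \<subseteq> stab Z" and "\<alpha> \<in> Z" and "\<forall>z\<in>Z. z - \<alpha> \<in> H"
  shows "Z = (\<lambda>h. \<alpha> + h) ` H"
proof (intro equalityI subsetI)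
  fix z assume "z \<in> Z"
  then show "z \<in> (\<lambda>h. \<alpha> + h) ` H" using assms(3) by (force simp: algebra_simps)
next
  fix z assume "z \<in> (\<lambda>h. \<alpha> + h) ` H"
  then obtain h where "h \<in> stab Z" "z = h + \<alpha>" using assms(1) by (auto simp: add.commute)
  with assms(2) show "z \<in> Z" by (simp add: stab_iff)
qed

lemma empty_or_coset_or_two_cosets:
  assumes "H \<subseteq> stab Z"
  obtains "Z = {}" | \<alpha> where "Z = (\<lambda>h. \<alpha> + h) ` H" | u v where "u \<in> Z" "v \<in> Z" "v - u \<notin> H"
  using eq_coset_if_periodic[OF assms] by blast

lemma sumset_stab_two_cosetsD:
  assumes "u \<in> sumset B (stab C)" and "v \<in> sumset B (stab C)" and "v - u \<notin> stab C"
  shows "\<exists>p\<in>B. \<exists>q\<in>B. q - p \<notin> stab C"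
proof -
  obtain p h where p: "p \<in> B" "h \<in> stab C" "u = p + h" using assms(1) unfolding sumset_def by blast
  obtain q h' where q: "q \<in> B" "h' \<in> stab C" "v = q + h'" using assms(2) unfolding sumset_def by blast
  have "v - u = (q - p) + (h' + - h)" using p(3) q(3) by (simp add: algebra_simps)
  then have "q - p \<notin> stab C" using assms(3) p(2) q(2) by (metis stab_add stab_uminus)
  with p(1) q(1) show ?thesis by blast
qed

section \<open>Growth of sumsets by sets meeting distinct cosets\<close>

lemma card_sumset_pair_ge:
  assumes "finite W" and "q - p \<notin> stab W"
  shows "card W + card (stab W) \<le> card (sumset W {p, q})"
proof -
  obtain w where w: "w \<in> W" "q - p + w \<notin> W"
    using assms stab_if_translate_subset[of W "q - p"] by auto
  define T where "T = (\<lambda>h. h + (w + q)) ` stab W"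
  have T_sub: "T \<subseteq> (\<lambda>x. x + q) ` W"
  proof
    fix t assume "t \<in> T"
    then obtain h where h: "h \<in> stab W" "t = (h + w) + q" unfolding T_def by (auto simp: add.assoc)
    with w(1) show "t \<in> (\<lambda>x. x + q) ` W" by (auto simp: stab_iff)
  qed
  have T_disjoint: "(\<lambda>x. x + p) ` W \<inter> T = {}"
  proof -
    have False if "h \<in> stab W" "w' \<in> W" "w' + p = h + (w + q)" for h w'
    proof -
      have "q - p + w = - h + w'" using that(3) by (simp add: algebra_simps)
      moreover have "- h + w' \<in> W" using stab_uminus[OF that(1)] that(2) by (simp add: stab_iff)
      ultimately show False using w(2) by simp
    qed
    then show ?thesis unfolding T_def by auto
  qed
  have "finite T" using T_sub assms(1) by (rule finite_subset[OF _ finite_imageI])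
  have "card W + card (stab W) = card ((\<lambda>x. x + p) ` W) + card T"
    by (simp add: T_def card_image inj_on_def)
  also have "\<dots> = card ((\<lambda>x. x + p) ` W \<union> T)"
    using assms(1) \<open>finite T\<close> T_disjoint by (simp add: card_Un_disjoint)
  also have "\<dots> \<le> card (sumset W {p, q})"
    using assms(1) T_sub by (auto simp: sumset_pair intro: card_mono)
  finally show ?thesis .
qed

definition in_distinct_cosets :: "'a::ab_group_add set \<Rightarrow> 'a set \<Rightarrow> bool" where
  "in_distinct_cosets H B \<longleftrightarrow> (\<forall>p\<in>B. \<forall>q\<in>B. q - p \<in> H \<longrightarrow> p = q)"

lemma in_distinct_cosets_zero: "in_distinct_cosets {0} B"
  by (simp add: in_distinct_cosets_def)

lemma in_distinct_cosets_if_card_le_1: "finite B \<Longrightarrow> card B \<le> 1 \<Longrightarrow> in_distinct_cosets H B"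
  by (simp add: in_distinct_cosets_def card_le_Suc0_iff_eq)

lemma in_distinct_cosets_stab_pair: "q - p \<notin> stab C \<Longrightarrow> in_distinct_cosets (stab C) {p, q}"
  using stab_uminus[of "p - q" C] by (auto simp: in_distinct_cosets_def)

lemma card_sumset_ge_in_distinct_cosets:
  assumes "finite W" "finite B" "B \<noteq> {}" "card B \<le> 2" "in_distinct_cosets (stab W) B"
  shows "card W + (card B - 1) * card (stab W) \<le> card (sumset W B)"
proof (cases "card B = 1")
  case True
  then obtain p where "B = {p}" by (meson card_1_singletonE)
  then show ?thesis by (simp add: sumset_singleton card_image inj_on_def)
next
  case False
  with assms(2-4) have "card B = 2" by (simp add: le_Suc_eq numeral_2_eq_2)
  then obtain p q where pq: "B = {p, q}" "p \<noteq> q" by (meson card_2_iff)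
  with assms(5) have "q - p \<notin> stab W" unfolding in_distinct_cosets_def by auto
  with assms(1) \<open>card B = 2\<close> show ?thesis by (simp add: pq(1) card_sumset_pair_ge)
qed

lemma card_sumset_fam_ge:
  fixes Y :: "'a::ab_group_add set"
  assumes "finite I" and "finite Y" and "H \<subseteq> stab Y"
    and "stab (sumset Y (sumset_fam A I)) \<subseteq> H"
    and "\<forall>i\<in>I. finite (A i) \<and> A i \<noteq> {} \<and> card (A i) \<le> 2 \<and> in_distinct_cosets H (A i)"
  shows "card Y + (\<Sum>i\<in>I. card (A i) - 1) * card H \<le> card (sumset Y (sumset_fam A I))"
  using assms(1,4,5)
proof (induction I rule: finite_induct)
  case empty
  then show ?case by (simp add: sumset_singleton)
next
  case (insert i I)
  define W where "W = sumset Y (sumset_fam A I)"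
  have W_step: "sumset Y (sumset_fam A (insert i I)) = sumset W (A i)"
    using insert.hyps by (simp add: W_def sumset_fam_insert sumset_assoc)
  have "stab W \<subseteq> H"
    using stab_subset_stab_sumset[of W "A i"] insert.prems(1) unfolding W_step by (rule order_trans)
  moreover have "H \<subseteq> stab W"
    using assms(3) stab_subset_stab_sumset[of Y] W_def by blast
  ultimately have stab_W: "stab W = H" by blast
  have "finite W"
    using assms(2) insert.hyps(1) insert.prems(2) by (simp add: W_def finite_sumset finite_sumset_fam)
  then have "card W + (card (A i) - 1) * card H \<le> card (sumset W (A i))"
    using insert.prems(2) stab_W card_sumset_ge_in_distinct_cosets by fastforce
  moreover have "card Y + (\<Sum>j\<in>I. card (A j) - 1) * card H \<le> card W"
    using insert.IH \<open>stab W \<subseteq> H\<close> insert.prems(2) by (simp add: W_def)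
  ultimately show ?case using insert.hyps W_step by (simp add: algebra_simps)
qed

lemma card_sumset_stab_ge:
  fixes X :: "'a::ab_group_add set"
  assumes "finite I" and "finite X" and "X \<noteq> {}"
    and "\<forall>i\<in>I. finite (A i) \<and> A i \<noteq> {} \<and> card (A i) \<le> 2 \<and> in_distinct_cosets (stab S) (A i)"
    and "S = sumset X (sumset_fam A I)"
  shows "card (sumset X (stab S)) + ((\<Sum>i\<in>I. card (A i)) - card I) * card (stab S) \<le> card S"
proof -
  have "finite S" and "S \<noteq> {}"
    using assms by (auto simp: finite_sumset finite_sumset_fam sumset_fam_nonempty sumset_eq_empty_iff)
  then have "finite (stab S)" using finite_stab by blast
  have "sumset (sumset X (stab S)) (sumset_fam A I) = S"
    by (metis assms(5) sumset_assoc sumset_commute sumset_stab_self)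
  moreover have "(\<Sum>i\<in>I. card (A i) - 1) = (\<Sum>i\<in>I. card (A i)) - card I"
    using assms(4) by (simp add: sum_subtractf_nat Suc_le_eq card_gt_0_iff)
  ultimately show ?thesis
    using card_sumset_fam_ge[of I "sumset X (stab S)" "stab S" A] assms(1,2,4) \<open>finite (stab S)\<close>
      stab_subset_stab_sumset_stab[of S X]
    by (simp add: finite_sumset)
qed

lemma in_distinct_cosets_if_sum_card_le_double:
  assumes "finite I" and "\<forall>i\<in>I. finite (A i)" and "(\<Sum>i\<in>I. card (A i)) \<le> 2 * card I"
    and "\<forall>i\<in>I. \<exists>p\<in>A i. \<exists>q\<in>A i. q - p \<notin> stab C"
  shows "\<forall>i\<in>I. card (A i) \<le> 2 \<and> in_distinct_cosets (stab C) (A i)"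
proof
  fix i assume "i \<in> I"
  have pair: "\<exists>p q. {p, q} \<subseteq> A j \<and> card {p, q} = 2 \<and> q - p \<notin> stab C" if "j \<in> I" for j
  proof -
    from assms(4) that obtain p q where "p \<in> A j" "q \<in> A j" "q - p \<notin> stab C" by auto
    moreover from this(3) have "p \<noteq> q" using zero_in_stab[of C] by auto
    ultimately have "{p, q} \<subseteq> A j \<and> card {p, q} = 2 \<and> q - p \<notin> stab C" by simp
    then show ?thesis by blast
  qed
  have ge2: "2 \<le> card (A j)" if j: "j \<in> I" for j
  proof -
    obtain p q where "{p, q} \<subseteq> A j" "card {p, q} = 2" using pair[OF j] by blast
    with card_mono[of "A j" "{p, q}"] assms(2) j show ?thesis by simp
  qed
  then have "(\<Sum>j\<in>I. 2) \<le> (\<Sum>j\<in>I. card (A j))" by (rule sum_mono)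
  with assms(3) have "(\<Sum>j\<in>I. 2) = (\<Sum>j\<in>I. card (A j))" by simp
  from sum_mono_inv[OF this ge2 \<open>i \<in> I\<close> assms(1)] have card_i: "card (A i) = 2" by simp
  obtain p q where pq: "{p, q} \<subseteq> A i" "card {p, q} = 2" "q - p \<notin> stab C"
    using pair[OF \<open>i \<in> I\<close>] by blast
  have "{p, q} = A i"
  proof (rule card_subset_eq)
    show "finite (A i)" using assms(2) \<open>i \<in> I\<close> by blast
  qed (use pq card_i in simp_all)
  from this[symmetric] card_i pq(3) show "card (A i) \<le> 2 \<and> in_distinct_cosets (stab C) (A i)"
    by (simp add: in_distinct_cosets_stab_pair)
qed

theorem lemma3p1:
  fixes X :: "'a::ab_group_add set" and A :: "nat \<Rightarrow> 'a set" and n :: nat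
  assumes "n \<ge> 1"
    and "finite X" and "X \<noteq> {}"
    and "\<forall>i\<in>{1..n}. finite (A i) \<and> A i \<noteq> {}"
    and "H = stab (sumset X (sumset_fam A {1..n}))"
    and "Z = (\<Inter>i\<in>{1..n}. sumset (A i) H)"
    and "(\<Sum>i\<in>{1..n}. card (A i)) \<le> 2 * n"
    and "\<forall>i\<in>{1..n}. card (A i - Z) \<le> 1"
    and "card (sumset X (sumset_fam A {1..n}))
           < card (sumset X H) + ((\<Sum>i\<in>{1..n}. card (A i)) - n) * card H"
  shows "H \<noteq> {0} \<and> (\<exists>\<alpha>. Z = (\<lambda>h. \<alpha> + h) ` H)"
proof (rule ccontr)
  assume contra: "\<not> ?thesis"
  let ?S = "sumset X (sumset_fam A {1..n})"
  have "H \<subseteq> stab Z"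
    using assms(5,6) stab_subset_stab_sumset_stab by (blast intro: stab_INT)
  have "\<forall>i\<in>{1..n}. card (A i) \<le> 2 \<and> in_distinct_cosets H (A i)"
  proof (cases rule: empty_or_coset_or_two_cosets[OF \<open>H \<subseteq> stab Z\<close>])
    case 1
    with assms(4,8) show ?thesis by (auto intro: in_distinct_cosets_if_card_le_1)
  next
    case (2 \<alpha>)
    with contra have "H = {0}" and "Z = {\<alpha>}" by auto
    with assms(4,8) show ?thesis
      by (auto simp: in_distinct_cosets_zero card_Diff_singleton_if split: if_splits)
  next
    case (3 u v)
    then have "\<forall>i\<in>{1..n}. \<exists>p\<in>A i. \<exists>q\<in>A i. q - p \<notin> stab ?S"
      using sumset_stab_two_cosetsD[of u _ ?S v] assms(5,6) by simp
    with assms(4,5,7) show ?thesis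
      using in_distinct_cosets_if_sum_card_le_double[of "{1..n}" A ?S] by simp
  qed
  then have "card (sumset X H) + ((\<Sum>i\<in>{1..n}. card (A i)) - n) * card H \<le> card ?S"
    using card_sumset_stab_ge[of "{1..n}" X A] assms(2-5) by simp
  with assms(9) show False by linarith
qed

end
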